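(* Let $G=(V,E)$ have $n\ge2$ vertices and at least one edge, let $\lambda^*=\rho(G)$, let $T\ge1$ be an integer and $\tau>0$. Set $R=(n+\tau)/\lambda^*$, $\nu=\tau/(R\lambda^* )$, $\eta=\sqrt{\log(n)/T}$ and $\alpha=8R\sqrt{\log(n)/T}$. Run the following procedure (Noisy-Order-Packing-MWU): let $w^{(1)}_v=1$ for all $v\in V$; for $t=1,\dots,T$: let $p^{(t)}_v=w^{(t)}_v/\sum_u w^{(t)}_u$; let $\sigma^{(t)}$ be the ordering of $V$ in nonincreasing order of $p^{(t)}$, ties broken by a fixed order on $V$; for each $v$ let $\hat m^{(t)}_v\sim N\big(\tfrac1R(1-q(\sigma^{(t)})_v/\lambda^* ),\nu^2\big)$ independently; set $w^{(t+1)}_v=w^{(t)}_v\exp(-\eta\hat m^{(t)}_v)$. Finally choose $t$ uniformly at random from $[T]$ and return $(p^{(t)},\sigma^{(t)})$. Then the returned $\sigma$ is the ordering of $V$ in nonincreasing order of the returned $p$, and with probability at least $1/2$ (over the noise and the choice of $t$), $\rho(S^*_\sigma)\ge(1-2\alpha)\lambda^*$.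
   Context: For nonempty $S\subseteq V$, $\rho(S)=|E(S)|/|S|$ with $E(S)$ the edges inside $S$, and $\rho(G)=\max_{\emptyset\ne S\subseteq V}\rho(S)$. For an ordering $\sigma$ of $V$ and $v\in V$, $q(\sigma)_v=|\{\{u,v\}\in E: u \text{ precedes } v \text{ in }\sigma\}|$; $S^\sigma_x$ is the set of vertices equal to or preceding $x$ in $\sigma$, and $S^*_\sigma$ is a prefix $S^\sigma_x$ of maximum density. $\log$ is the natural logarithm. *)

theory Defs
  imports "HOL-Probability.Probability"
begin

definition simple_graph :: "'a set \<Rightarrow> 'a set set \<Rightarrow> bool" where
  "simple_graph V E \<longleftrightarrow> finite V \<and> (\<forall>e\<in>E. e \<subseteq> V \<and> card e = 2)"

definition edges_in :: "'a set set \<Rightarrow> 'a set \<Rightarrow> 'a set set" where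
  "edges_in E S = {e \<in> E. e \<subseteq> S}"

definition dens :: "'a set set \<Rightarrow> 'a set \<Rightarrow> real" where
  "dens E S = real (card (edges_in E S)) / real (card S)"

definition max_density :: "'a set \<Rightarrow> 'a set set \<Rightarrow> real" where
  "max_density V E = Max {dens E S | S. S \<subseteq> V \<and> S \<noteq> {}}"

(* Orderings of V are represented as lists sigma with distinct sigma and set sigma = V.
   Vertices strictly preceding v in sigma: *)
definition preceding :: "'a list \<Rightarrow> 'a \<Rightarrow> 'a set" where
  "preceding \<sigma> v = set (takeWhile (\<lambda>x. x \<noteq> v) \<sigma>)"

definition qdeg :: "'a set set \<Rightarrow> 'a list \<Rightarrow> 'a \<Rightarrow> nat" where
  "qdeg E \<sigma> v = card {e \<in> E. \<exists>u. e = {u, v} \<and> u \<in> preceding \<sigma> v}"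

definition prefix_set :: "'a list \<Rightarrow> 'a \<Rightarrow> 'a set" where
  "prefix_set \<sigma> x = insert x (preceding \<sigma> x)"

definition best_prefix :: "'a set set \<Rightarrow> 'a list \<Rightarrow> 'a set" where
  "best_prefix E \<sigma> = (SOME S. (\<exists>x\<in>set \<sigma>. S = prefix_set \<sigma> x) \<and>
      (\<forall>y\<in>set \<sigma>. dens E (prefix_set \<sigma> y) \<le> dens E S))"

(* ordering of V in nonincreasing order of p, ties broken by the fixed linear order on 'a
   (sort_key is stable, and the input list is sorted w.r.t. the fixed order) *)
definition order_by :: "'a::linorder set \<Rightarrow> ('a \<Rightarrow> real) \<Rightarrow> 'a list" where
  "order_by V p = sort_key (\<lambda>v. - p v) (sorted_list_of_set V)"

definition normalize :: "'a set \<Rightarrow> ('a \<Rightarrow> real) \<Rightarrow> 'a \<Rightarrow> real" where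
  "normalize V w v = w v / (\<Sum>u\<in>V. w u)"

(* Noisy-Order-Packing-MWU weights.  mwu_weights V E lam R eta Z k = w^{(k+1)}.
   Z (t, v) is the Gaussian noise of round t (distributed N(0, nu^2)), so that
   mhat^{(t)}_v = (1/R) (1 - q(sigma^{(t)})_v / lam) + Z (t, v) ~ N((1/R)(1 - q/lam), nu^2). *)
fun mwu_weights :: "'a::linorder set \<Rightarrow> 'a set set \<Rightarrow> real \<Rightarrow> real \<Rightarrow> real \<Rightarrow> (nat \<times> 'a \<Rightarrow> real)
    \<Rightarrow> nat \<Rightarrow> 'a \<Rightarrow> real" where
  "mwu_weights V E lam R eta Z 0 = (\<lambda>v. 1)"
| "mwu_weights V E lam R eta Z (Suc k) =
     (let w = mwu_weights V E lam R eta Z k;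
          \<sigma> = order_by V (normalize V w)
      in (\<lambda>v. w v * exp (- eta * ((1 / R) * (1 - real (qdeg E \<sigma> v) / lam) + Z (Suc k, v)))))"

definition mwu_p :: "'a::linorder set \<Rightarrow> 'a set set \<Rightarrow> real \<Rightarrow> real \<Rightarrow> real \<Rightarrow> (nat \<times> 'a \<Rightarrow> real)
    \<Rightarrow> nat \<Rightarrow> 'a \<Rightarrow> real" where
  "mwu_p V E lam R eta Z t = normalize V (mwu_weights V E lam R eta Z (t - 1))"

definition mwu_sigma :: "'a::linorder set \<Rightarrow> 'a set set \<Rightarrow> real \<Rightarrow> real \<Rightarrow> real \<Rightarrow> (nat \<times> 'a \<Rightarrow> real)
    \<Rightarrow> nat \<Rightarrow> 'a list" where
  "mwu_sigma V E lam R eta Z t = order_by V (mwu_p V E lam R eta Z t)"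

definition mwu_space :: "'a set \<Rightarrow> nat \<Rightarrow> real \<Rightarrow> ((nat \<times> 'a \<Rightarrow> real) \<times> nat) measure" where
  "mwu_space V T nu =
     (PiM ({1..T} \<times> V) (\<lambda>_. density lborel (normal_density 0 nu)))
       \<Otimes>\<^sub>M uniform_count_measure {1..T}"

end

theory Submission
  imports Defs
begin

text \<open>Noisy-Order-Packing-MWU is the Hedge algorithm, run on the losses
  \<open>m\<^sub>v = (1 - q(\<sigma>)\<^sub>v / \<lambda>\<^sup>*) / R\<close> (which lie in \<open>[-1, 1]\<close>) perturbed by centred
  Gaussian noise. The Hedge potential, the total weight times \<open>exp \<eta>\<close> to the sum of the
  expected losses so far, grows in expectation by a factor of at most \<open>exp (\<eta>\<^sup>2 + \<eta>\<^sup>2\<nu>\<^sup>2/2)\<close>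
  per round. A densest set \<open>S\<close> has nonpositive total loss in every round, so its vertices keep
  total weight at least \<open>exp\<close> of \<open>-\<eta>\<close> times the average noise on \<open>S\<close>. Comparing the two bounds
  the expected sum of the expected losses by \<open>5\<eta>T/2\<close>.

  On the other hand, summation by parts along \<open>\<sigma>\<close> shows that the \<open>p\<close>-weighted back-degree
  never exceeds the density of the best prefix of \<open>\<sigma>\<close>. Hence a round whose best prefix has density
  below \<open>(1 - 2\<alpha>)\<lambda>\<^sup>*\<close> has expected loss above \<open>2\<alpha>/R = 16\<eta>\<close>, and by Markov's inequality such
  rounds make up at most half of all rounds in expectation.\<close>

section \<open>Orderings by weight\<close>

lemma sort_key_cong_order:
  assumes "\<And>x z. x \<in> set xs \<Longrightarrow> z \<in> set xs \<Longrightarrow> f x \<le> f z \<longleftrightarrow> g x \<le> g z"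
  shows "sort_key f xs = sort_key g xs"
  using assms
proof (induction xs)
  case (Cons y ys)
  have "insort_key f y zs = insort_key g y zs" if "set zs \<subseteq> set ys" for zs
    using that Cons.prems by (induction zs) auto
  then show ?case
    using Cons by (simp add: set_sort)
qed simp

lemma order_by_cong:
  assumes "finite V" and "\<And>x z. x \<in> V \<Longrightarrow> z \<in> V \<Longrightarrow> p z \<le> p x \<longleftrightarrow> p' z \<le> p' x"
  shows "order_by V p = order_by V p'"
  unfolding order_by_def using assms by (intro sort_key_cong_order) auto

lemma
  assumes "finite V"
  shows distinct_order_by: "distinct (order_by V p)"
    and set_order_by: "set (order_by V p) = V"
  using assms by (auto simp: order_by_def distinct_sort set_sort)

lemma sorted_order_by: "sorted_wrt (\<lambda>u v. p u \<ge> p v) (order_by V p)"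
proof -
  have "sorted (map (\<lambda>v. - p v) (order_by V p))"
    unfolding order_by_def by (rule sorted_sort_key)
  then show ?thesis
    by (simp add: sorted_map)
qed

lemma length_order_by: "finite V \<Longrightarrow> length (order_by V p) = card V"
  by (metis distinct_card distinct_order_by set_order_by)

section \<open>Back-degrees and prefix densities\<close>

lemma preceding_nth:
  assumes "distinct s" "i < length s"
  shows "preceding s (s ! i) = set (take i s)"
proof -
  have "takeWhile (\<lambda>x. x \<noteq> s ! i) s = take i s"
    by (rule takeWhile_eq_take_P_nth) (use assms in \<open>auto simp: nth_eq_iff_index_eq\<close>)
  then show ?thesis
    by (simp add: preceding_def)
qed

lemma prefix_set_nth:
  assumes "distinct s" "i < length s"
  shows "prefix_set s (s ! i) = set (take (Suc i) s)"
  using assms by (simp add: prefix_set_def preceding_nth take_Suc_conv_app_nth)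

lemma prefix_set_subset: "prefix_set s x \<subseteq> insert x (set s)"
  by (auto simp: prefix_set_def preceding_def dest: set_takeWhileD)

lemma qdeg_less_length:
  assumes "distinct s" "v \<in> set s"
  shows "qdeg E s v < length s"
proof -
  obtain i where i: "i < length s" "s ! i = v"
    using assms by (auto simp: in_set_conv_nth)
  have "{e \<in> E. \<exists>u. e = {u, v} \<and> u \<in> preceding s v} \<subseteq> (\<lambda>u. {u, v}) ` preceding s v"
    by auto
  moreover have "finite (preceding s v)"
    by (simp add: preceding_def)
  ultimately have "qdeg E s v \<le> card (preceding s v)"
    unfolding qdeg_def by (meson card_image_le card_mono finite_imageI order_trans)
  also have "\<dots> \<le> i"
    using preceding_nth[OF assms(1) i(1)] i card_length[of "take i s"] by simp
  finally show ?thesis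
    using i by linarith
qed

lemma card_edges_in_insert:
  assumes "finite E" "\<forall>e\<in>E. card e = 2" "x \<notin> A"
  shows "card (edges_in E (insert x A))
           = card (edges_in E A) + card {e \<in> E. \<exists>u. e = {u, x} \<and> u \<in> A}"
proof -
  have "edges_in E (insert x A) = edges_in E A \<union> {e \<in> E. \<exists>u. e = {u, x} \<and> u \<in> A}"
  proof (intro equalityI subsetI)
    fix e
    assume e: "e \<in> edges_in E (insert x A)"
    then obtain a b where "e = {a, b}" "a \<noteq> b" "e \<in> E" "e \<subseteq> insert x A"
      using assms(2) by (auto simp: edges_in_def card_2_iff)
    then show "e \<in> edges_in E A \<union> {e \<in> E. \<exists>u. e = {u, x} \<and> u \<in> A}"
      by (cases "e \<subseteq> A") (auto simp: edges_in_def insert_commute)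
  qed (auto simp: edges_in_def)
  moreover have "edges_in E A \<inter> {e \<in> E. \<exists>u. e = {u, x} \<and> u \<in> A} = {}"
    using assms(3) by (auto simp: edges_in_def)
  ultimately show ?thesis
    using assms(1) by (simp add: card_Un_disjoint edges_in_def)
qed

lemma qdeg_nth:
  assumes "distinct s" "i < length s" "finite E" "\<forall>e\<in>E. card e = 2"
  shows "real (qdeg E s (s ! i))
           = real (card (edges_in E (set (take (Suc i) s)))) - real (card (edges_in E (set (take i s))))"
proof -
  have "s ! i \<notin> set (take i s)"
    using assms by (auto simp: in_set_conv_nth nth_eq_iff_index_eq)
  moreover have "set (take (Suc i) s) = insert (s ! i) (set (take i s))"
    using assms by (simp add: take_Suc_conv_app_nth)
  ultimately show ?thesis
    using assms by (simp add: card_edges_in_insert qdeg_def preceding_nth)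
qed

lemma card_edges_in_le_sum_qdeg:
  assumes "distinct s" "S \<subseteq> set s" "\<forall>e\<in>E. card e = 2"
  shows "card (edges_in E S) \<le> (\<Sum>v\<in>S. qdeg E s v)"
proof -
  let ?back = "\<lambda>v. {e \<in> E. \<exists>u. e = {u, v} \<and> u \<in> preceding s v}"
  have "edges_in E S \<subseteq> (\<Union>v\<in>S. ?back v)"
  proof
    fix e
    assume "e \<in> edges_in E S"
    then obtain a b where ab: "e = {a, b}" "a \<noteq> b" "e \<in> E" "a \<in> S" "b \<in> S"
      using assms(3) by (auto simp: edges_in_def card_2_iff)
    moreover obtain i j where ij: "i < length s" "s ! i = a" "j < length s" "s ! j = b"
      using ab(4,5) assms(2) by (meson in_set_conv_nth subsetD)
    have pre: "s ! i \<in> preceding s (s ! j)" if "i < j" "j < length s" for i j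
      using that assms(1) by (auto simp: preceding_nth in_set_conv_nth)
    have "i < j \<or> j < i"
      using ij ab by (metis linorder_neqE_nat)
    then show "e \<in> (\<Union>v\<in>S. ?back v)"
      using pre ij ab by (auto simp: insert_commute)
  qed
  moreover have "finite (\<Union>v\<in>S. ?back v)"
  proof (rule finite_subset)
    show "(\<Union>v\<in>S. ?back v) \<subseteq> (\<lambda>(u, v). {u, v}) ` (set s \<times> S)"
      by (force simp: preceding_def dest: set_takeWhileD)
    show "finite ((\<lambda>(u, v). {u, v}) ` (set s \<times> S))"
      using assms(2) finite_subset by blast
  qed
  ultimately have "card (edges_in E S) \<le> card (\<Union>v\<in>S. ?back v)"
    by (simp add: card_mono)
  also have "\<dots> \<le> (\<Sum>v\<in>S. qdeg E s v)"
    unfolding qdeg_def using assms(2) finite_subset by (intro card_UN_le) auto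
  finally show ?thesis .
qed

lemma abel_summation_le:
  fixes a e :: "nat \<Rightarrow> real"
  assumes antimono: "\<And>i. i < N \<Longrightarrow> a (Suc i) \<le> a i" and nonneg: "0 \<le> a N"
    and "e 0 = 0" and bound: "\<And>i. i \<le> N \<Longrightarrow> e (Suc i) \<le> D * real (Suc i)"
  shows "(\<Sum>i\<le>N. a i * (e (Suc i) - e i)) \<le> D * (\<Sum>i\<le>N. a i)"
proof -
  have "(\<Sum>i\<le>M. a i * (e (Suc i) - e i)) + (D * real (Suc M) - e (Suc M)) * a M
          \<le> D * (\<Sum>i\<le>M. a i)" if "M \<le> N" for M
    using that
  proof (induction M)
    case (Suc M)
    have "(D * real (Suc M) - e (Suc M)) * (a (Suc M) - a M) \<le> 0"
      using Suc.prems antimono bound[of M] by (intro mult_nonneg_nonpos) auto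
    then show ?case
      using Suc by (simp add: algebra_simps)
  qed (simp add: \<open>e 0 = 0\<close> algebra_simps)
  moreover have "0 \<le> (D * real (Suc N) - e (Suc N)) * a N"
    using bound[of N] nonneg by simp
  ultimately show ?thesis
    by fastforce
qed

lemma best_prefix:
  assumes "s \<noteq> []"
  shows "\<exists>x\<in>set s. best_prefix E s = prefix_set s x"
    and "y \<in> set s \<Longrightarrow> dens E (prefix_set s y) \<le> dens E (best_prefix E s)"
proof -
  let ?F = "(\<lambda>y. dens E (prefix_set s y)) ` set s"
  obtain x where "x \<in> set s" "dens E (prefix_set s x) = Max ?F"
    using Max_in[of ?F] assms by fastforce
  then have "x \<in> set s" "\<forall>y\<in>set s. dens E (prefix_set s y) \<le> dens E (prefix_set s x)"
    by auto
  then have "\<exists>S. (\<exists>x\<in>set s. S = prefix_set s x) \<and> (\<forall>y\<in>set s. dens E (prefix_set s y) \<le> dens E S)"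
    by blast
  from someI_ex[OF this] show "\<exists>x\<in>set s. best_prefix E s = prefix_set s x"
    and "y \<in> set s \<Longrightarrow> dens E (prefix_set s y) \<le> dens E (best_prefix E s)"
    unfolding best_prefix_def by blast+
qed

lemma dens_nonneg: "dens E S \<ge> 0"
  by (simp add: dens_def)

lemma sum_set_distinct_nth:
  "distinct s \<Longrightarrow> (\<Sum>v\<in>set s. f v) = (\<Sum>i<length s. f (s ! i))"
  by (simp add: sum_list_distinct_conv_sum_set[symmetric] sum_list_sum_nth atLeast0LessThan)

text \<open>By summation by parts along \<open>s\<close>, the weighted back-degree sum is a convex combination of
  prefix densities.\<close>

lemma weighted_qdeg_le_best_prefix:
  assumes s: "distinct s" "s \<noteq> []" and sorted: "sorted_wrt (\<lambda>u v. p u \<ge> p v) s"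
    and p: "\<forall>v\<in>set s. p v \<ge> 0" "(\<Sum>v\<in>set s. p v) = 1"
    and E: "finite E" "\<forall>e\<in>E. card e = 2"
  shows "(\<Sum>v\<in>set s. p v * real (qdeg E s v)) \<le> dens E (best_prefix E s)"
proof -
  define D where "D = dens E (best_prefix E s)"
  define e where "e i = real (card (edges_in E (set (take i s))))" for i
  obtain N where N: "length s = Suc N"
    using s(2) by (cases s) auto
  have "e 0 = 0"
    using E(2) by (auto simp: e_def edges_in_def)
  moreover have "e (Suc i) \<le> D * real (Suc i)" if "i \<le> N" for i
  proof -
    have "dens E (prefix_set s (s ! i)) \<le> D"
      unfolding D_def using that N by (intro best_prefix(2) s(2)) auto
    moreover have "card (set (take (Suc i) s)) = Suc i"
      using that N s(1) by (simp add: distinct_card)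
    ultimately show ?thesis
      using that N by (simp add: prefix_set_nth[OF s(1)] dens_def e_def divide_le_eq)
  qed
  moreover have "p (s ! Suc i) \<le> p (s ! i)" if "i < N" for i
    using sorted that N by (auto simp: sorted_wrt_iff_nth_less)
  moreover have "0 \<le> p (s ! N)"
    using p(1) N by simp
  ultimately have "(\<Sum>i\<le>N. p (s ! i) * (e (Suc i) - e i)) \<le> D * (\<Sum>i\<le>N. p (s ! i))"
    by (intro abel_summation_le)
  moreover have "(\<Sum>v\<in>set s. p v * real (qdeg E s v)) = (\<Sum>i\<le>N. p (s ! i) * (e (Suc i) - e i))"
    using N by (simp add: sum_set_distinct_nth[OF s(1)] qdeg_nth[OF s(1) _ E] e_def lessThan_Suc_atMost)
  moreover have "(\<Sum>i\<le>N. p (s ! i)) = 1"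
    using p(2) N by (simp add: sum_set_distinct_nth[OF s(1)] lessThan_Suc_atMost)
  ultimately show ?thesis
    by (simp add: D_def)
qed

lemma dens_le_card:
  assumes "\<forall>e\<in>E. card e = 2" "finite S"
  shows "dens E S \<le> real (card S)"
proof -
  have "edges_in E S \<subseteq> (\<lambda>(a, b). {a, b}) ` (S \<times> S)"
  proof
    fix e
    assume "e \<in> edges_in E S"
    then have "e \<in> E" "e \<subseteq> S"
      by (auto simp: edges_in_def)
    moreover obtain a b where "e = {a, b}"
      using assms(1) \<open>e \<in> E\<close> by (meson card_2_iff)
    ultimately show "e \<in> (\<lambda>(a, b). {a, b}) ` (S \<times> S)"
      by auto
  qed
  then have "card (edges_in E S) \<le> card (S \<times> S)"
    using assms(2) by (meson card_image_le card_mono finite_SigmaI finite_imageI order_trans)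
  then have "real (card (edges_in E S)) \<le> real (card S) * real (card S)"
    by (simp add: card_cartesian_product flip: of_nat_mult)
  then show ?thesis
    by (cases "card S = 0") (simp_all add: dens_def divide_le_eq)
qed

lemma
  assumes "simple_graph V E"
  shows dens_le_max_density: "S \<subseteq> V \<Longrightarrow> S \<noteq> {} \<Longrightarrow> dens E S \<le> max_density V E"
    and max_density_attained: "V \<noteq> {} \<Longrightarrow> \<exists>S\<subseteq>V. S \<noteq> {} \<and> dens E S = max_density V E"
proof -
  let ?C = "{S. S \<subseteq> V \<and> S \<noteq> {}}"
  have md: "max_density V E = Max (dens E ` ?C)"
    unfolding max_density_def by (simp add: setcompr_eq_image)
  have fin: "finite (dens E ` ?C)"
    using assms by (simp add: simple_graph_def)
  show "S \<subseteq> V \<Longrightarrow> S \<noteq> {} \<Longrightarrow> dens E S \<le> max_density V E"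
    unfolding md using fin by (simp add: Max_ge)
  assume "V \<noteq> {}"
  then have "dens E ` ?C \<noteq> {}"
    by blast
  then have "max_density V E \<in> dens E ` ?C"
    unfolding md using fin by (intro Max_in)
  then obtain S where "S \<in> ?C" "max_density V E = dens E S"
    by (rule imageE)
  then show "\<exists>S\<subseteq>V. S \<noteq> {} \<and> dens E S = max_density V E"
    by auto
qed

lemma max_density_pos:
  assumes "simple_graph V E" "E \<noteq> {}"
  shows "max_density V E > 0"
proof -
  obtain e where e: "e \<in> E" "e \<subseteq> V" "card e = 2"
    using assms by (auto simp: simple_graph_def)
  then have "e \<noteq> {}"
    by auto
  have "edges_in E e \<subseteq> Pow e"
    by (auto simp: edges_in_def)
  moreover have "finite e"
    using e(3) by (metis card.infinite zero_neq_numeral)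
  ultimately have "finite (edges_in E e)"
    by (meson finite_Pow_iff finite_subset)
  moreover have "e \<in> edges_in E e"
    using e by (simp add: edges_in_def)
  ultimately have "dens E e > 0"
    using e(3) by (auto simp: dens_def card_gt_0_iff)
  also have "\<dots> \<le> max_density V E"
    using dens_le_max_density[OF assms(1) e(2) \<open>e \<noteq> {}\<close>] .
  finally show ?thesis .
qed

lemma max_density_le_card:
  assumes "simple_graph V E" "V \<noteq> {}"
  shows "max_density V E \<le> real (card V)"
proof -
  obtain S where S: "S \<subseteq> V" "dens E S = max_density V E"
    using max_density_attained[OF assms] by blast
  have "finite V" "\<forall>e\<in>E. card e = 2"
    using assms(1) by (auto simp: simple_graph_def)
  then have "dens E S \<le> real (card S)"
    using S(1) by (intro dens_le_card) (auto intro: finite_subset)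
  also have "\<dots> \<le> real (card V)"
    using S(1) \<open>finite V\<close> by (simp add: card_mono)
  finally show ?thesis
    using S(2) by simp
qed

section \<open>Elementary inequalities\<close>

lemma exp_neg_le_quadratic:
  fixes y :: real
  assumes "\<bar>y\<bar> \<le> 1"
  shows "exp (- y) \<le> 1 - y + y\<^sup>2"
proof (cases "y \<le> 0")
  case True
  then show ?thesis
    using exp_bound[of "- y"] assms by simp
next
  case False
  then have y: "0 < y" "y \<le> 1"
    using assms by auto
  have "exp (- y) = 1 / exp y"
    by (simp add: exp_minus field_simps)
  also have "\<dots> \<le> 1 / (1 + y)"
    using y exp_ge_add_one_self[of y] by (intro divide_left_mono) auto
  also have "\<dots> \<le> 1 - y + y\<^sup>2"
  proof -
    have "1 \<le> (1 + y) * (1 - y + y\<^sup>2)"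
      using y by (simp add: power2_eq_square algebra_simps)
    then show ?thesis
      using y by (simp add: divide_le_eq mult.commute)
  qed
  finally show ?thesis .
qed

lemma sum_weighted_exp_le:
  fixes p m :: "'a \<Rightarrow> real"
  assumes "\<And>v. v \<in> V \<Longrightarrow> p v \<ge> 0" "(\<Sum>v\<in>V. p v) = 1"
    and m: "\<And>v. v \<in> V \<Longrightarrow> \<bar>m v\<bar> \<le> 1" and eta: "0 \<le> eta" "eta \<le> 1"
  shows "(\<Sum>v\<in>V. p v * exp (- eta * m v)) \<le> exp (- eta * (\<Sum>v\<in>V. p v * m v) + eta\<^sup>2)"
proof -
  have "exp (- eta * m v) \<le> 1 - eta * m v + eta\<^sup>2" if "v \<in> V" for v
  proof -
    have "\<bar>eta * m v\<bar> \<le> 1"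
      using m[OF that] eta by (simp add: abs_mult mult_le_one)
    moreover have "(eta * m v)\<^sup>2 \<le> eta\<^sup>2"
      using m[OF that] by (simp add: power_mult_distrib abs_square_le_1 mult_left_le)
    ultimately show ?thesis
      using exp_neg_le_quadratic[of "eta * m v"] by simp
  qed
  then have "(\<Sum>v\<in>V. p v * exp (- eta * m v)) \<le> (\<Sum>v\<in>V. p v * (1 - eta * m v + eta\<^sup>2))"
    using assms(1) by (intro sum_mono mult_left_mono) auto
  also have "\<dots> = 1 - eta * (\<Sum>v\<in>V. p v * m v) + eta\<^sup>2"
    using assms(2)
    by (simp add: algebra_simps sum.distrib sum_subtractf sum_distrib_left flip: sum_distrib_right)
  also have "\<dots> \<le> exp (- eta * (\<Sum>v\<in>V. p v * m v) + eta\<^sup>2)"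
    using exp_ge_add_one_self[of "- eta * (\<Sum>v\<in>V. p v * m v) + eta\<^sup>2"] by (simp add: algebra_simps)
  finally show ?thesis .
qed

lemma exp_mean_le_sum_exp:
  fixes a :: "'a \<Rightarrow> real"
  assumes "finite S" "S \<noteq> {}"
  shows "exp ((\<Sum>v\<in>S. a v) / real (card S)) \<le> (\<Sum>v\<in>S. exp (a v))"
proof -
  have "Max (a ` S) \<in> a ` S"
    using assms by simp
  then obtain u where "u \<in> S" "a u = Max (a ` S)"
    by auto
  then have u: "u \<in> S" "\<And>v. v \<in> S \<Longrightarrow> a v \<le> a u"
    using assms(1) by auto
  have "(\<Sum>v\<in>S. a v) \<le> real (card S) * a u"
    using u(2) by (rule sum_bounded_above)
  then have "(\<Sum>v\<in>S. a v) / real (card S) \<le> a u"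
    using assms by (simp add: divide_le_eq card_gt_0_iff mult.commute)
  then have "exp ((\<Sum>v\<in>S. a v) / real (card S)) \<le> exp (a u)"
    by simp
  also have "\<dots> \<le> (\<Sum>v\<in>S. exp (a v))"
    using u(1) _ assms(1) by (rule member_le_sum) simp
  finally show ?thesis .
qed

section \<open>Gaussian noise and random rounds\<close>

abbreviation centered_normal :: "real \<Rightarrow> real measure" where
  "centered_normal nu \<equiv> density lborel (normal_density 0 nu)"

abbreviation gaussian_noise :: "'i set \<Rightarrow> real \<Rightarrow> ('i \<Rightarrow> real) measure" where
  "gaussian_noise I nu \<equiv> PiM I (\<lambda>_. centered_normal nu)"

lemma measurable_noise_coordinate: "i \<in> I \<Longrightarrow> (\<lambda>Z. Z i) \<in> borel_measurable (gaussian_noise I nu)"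
  by measurable

context
  fixes nu :: real
  assumes nu: "nu > 0"
begin

lemma prob_space_gaussian_noise: "prob_space (gaussian_noise I nu)"
  by (intro prob_space_PiM prob_space_normal_density nu)

lemma nn_integral_exp_centered_normal:
  "(\<integral>\<^sup>+x. ennreal (exp (c * x)) \<partial>centered_normal nu) = ennreal (exp (c\<^sup>2 * nu\<^sup>2 / 2))"
proof -
  have shift: "normal_density 0 nu x * exp (c * x) = exp (c\<^sup>2 * nu\<^sup>2 / 2) * normal_density (c * nu\<^sup>2) nu x"
    for x
  proof -
    have "- x\<^sup>2 / (2 * nu\<^sup>2) + c * x = c\<^sup>2 * nu\<^sup>2 / 2 + (- (x - c * nu\<^sup>2)\<^sup>2 / (2 * nu\<^sup>2))"
      using nu by (simp add: field_simps power2_eq_square)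
    then show ?thesis
      unfolding normal_density_def by (simp add: algebra_simps flip: exp_add)
  qed
  have "(\<integral>\<^sup>+x. ennreal (exp (c * x)) \<partial>centered_normal nu)
      = (\<integral>\<^sup>+x. ennreal (normal_density 0 nu x) * ennreal (exp (c * x)) \<partial>lborel)"
    by (subst nn_integral_density) auto
  also have "\<dots> = (\<integral>\<^sup>+x. ennreal (exp (c\<^sup>2 * nu\<^sup>2 / 2)) * ennreal (normal_density (c * nu\<^sup>2) nu x) \<partial>lborel)"
    by (intro nn_integral_cong) (simp add: shift flip: ennreal_mult)
  also have "\<dots> = ennreal (exp (c\<^sup>2 * nu\<^sup>2 / 2))"
    using nn_integral_eq_integral[OF integrable_normal_density[OF nu]] integral_normal_density[OF nu]
    by (subst nn_integral_cmult) auto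
  finally show ?thesis .
qed

lemma
  assumes "i \<in> I"
  shows integrable_noise_coordinate: "integrable (gaussian_noise I nu) (\<lambda>Z. Z i)"
    and integral_noise_coordinate: "(\<integral>Z. Z i \<partial>gaussian_noise I nu) = 0"
proof -
  have distr: "distr (gaussian_noise I nu) (centered_normal nu) (\<lambda>Z. Z i) = centered_normal nu"
    using assms prob_space_normal_density[OF nu] by (intro distr_PiM_component) auto
  have meas: "(\<lambda>Z. Z i) \<in> measurable (gaussian_noise I nu) (centered_normal nu)"
    using assms by (intro measurable_component_singleton)
  have "integrable (distr (gaussian_noise I nu) (centered_normal nu) (\<lambda>Z. Z i)) (\<lambda>x. x)"
    unfolding distr
    by (subst integrable_density) (auto simp: integrable_normal_moment_nz_1[OF nu])
  then show "integrable (gaussian_noise I nu) (\<lambda>Z. Z i)"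
    by (subst (asm) integrable_distr_eq[OF meas]) auto
  have "(\<integral>x. x \<partial>distr (gaussian_noise I nu) (centered_normal nu) (\<lambda>Z. Z i)) = 0"
    unfolding distr
    by (subst integral_density) (auto simp: integral_normal_moment_nz_1[OF nu])
  then show "(\<integral>Z. Z i \<partial>gaussian_noise I nu) = 0"
    by (subst (asm) integral_distr[OF meas]) auto
qed

lemma nn_integral_sum_exp_noise:
  fixes a :: "'a \<Rightarrow> real"
  assumes "finite V" "\<And>v. v \<in> V \<Longrightarrow> a v \<ge> 0"
  shows "(\<integral>\<^sup>+Z. ennreal (\<Sum>v\<in>V. a v * exp (- eta * Z (i, v))) \<partial>gaussian_noise ({i} \<times> V) nu)
           = ennreal ((\<Sum>v\<in>V. a v) * exp (eta\<^sup>2 * nu\<^sup>2 / 2))"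
proof -
  let ?P = "gaussian_noise ({i} \<times> V) nu"
  have coordinate: "(\<integral>\<^sup>+Z. ennreal (exp (- eta * Z (i, v))) \<partial>?P) = ennreal (exp (eta\<^sup>2 * nu\<^sup>2 / 2))"
    if "v \<in> V" for v
  proof -
    have distr: "distr ?P (centered_normal nu) (\<lambda>Z. Z (i, v)) = centered_normal nu"
      using that prob_space_normal_density[OF nu] by (intro distr_PiM_component) auto
    have "(\<integral>\<^sup>+Z. ennreal (exp (- eta * Z (i, v))) \<partial>?P)
        = (\<integral>\<^sup>+x. ennreal (exp (- eta * x)) \<partial>distr ?P (centered_normal nu) (\<lambda>Z. Z (i, v)))"
      using that by (subst nn_integral_distr) (auto intro!: measurable_component_singleton)
    also have "\<dots> = ennreal (exp ((- eta)\<^sup>2 * nu\<^sup>2 / 2))"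
      unfolding distr by (rule nn_integral_exp_centered_normal)
    finally show ?thesis
      by simp
  qed
  have "(\<integral>\<^sup>+Z. ennreal (\<Sum>v\<in>V. a v * exp (- eta * Z (i, v))) \<partial>?P)
      = (\<integral>\<^sup>+Z. (\<Sum>v\<in>V. ennreal (a v) * ennreal (exp (- eta * Z (i, v)))) \<partial>?P)"
    using assms(2) by (intro nn_integral_cong) (simp add: ennreal_mult sum_ennreal[symmetric])
  also have "\<dots> = (\<Sum>v\<in>V. (\<integral>\<^sup>+Z. ennreal (a v) * ennreal (exp (- eta * Z (i, v))) \<partial>?P))"
    by (rule nn_integral_sum) measurable
  also have "\<dots> = (\<Sum>v\<in>V. ennreal (a v) * (\<integral>\<^sup>+Z. ennreal (exp (- eta * Z (i, v))) \<partial>?P))"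
  proof (intro sum.cong refl nn_integral_cmult)
    fix v
    assume "v \<in> V"
    then show "(\<lambda>Z. ennreal (exp (- eta * Z (i, v)))) \<in> borel_measurable ?P"
      by measurable (use \<open>v \<in> V\<close> in simp)
  qed
  also have "\<dots> = (\<Sum>v\<in>V. ennreal (a v) * ennreal (exp (eta\<^sup>2 * nu\<^sup>2 / 2)))"
    by (intro sum.cong refl) (simp only: coordinate)
  also have "\<dots> = ennreal ((\<Sum>v\<in>V. a v) * exp (eta\<^sup>2 * nu\<^sup>2 / 2))"
    using assms(2) by (simp add: sum_distrib_right ennreal_mult sum_ennreal[symmetric])
  finally show ?thesis .
qed

end

lemma (in prob_space) expectation_le_ln_of_nn_integral_exp:
  assumes f: "integrable M f" and exp_f: "(\<integral>\<^sup>+x. ennreal (exp (f x)) \<partial>M) \<le> ennreal C" and "C > 0"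
  shows "expectation f \<le> ln C"
proof -
  have "integrable M (\<lambda>x. exp (f x))"
    using exp_f f by (intro integrableI_nonneg) (auto simp: top.not_eq_extremum le_less_trans)
  moreover have "expectation (\<lambda>x. exp (f x)) \<le> C"
    using exp_f f \<open>C > 0\<close> by (subst integral_eq_nn_integral) (auto intro!: enn2real_leI)
  moreover have "f x + 1 - ln C \<le> exp (f x) / C" for x
    using exp_ge_add_one_self[of "f x - ln C"] \<open>C > 0\<close> by (simp add: exp_diff)
  ultimately have "expectation (\<lambda>x. f x + 1 - ln C) \<le> expectation (\<lambda>x. exp (f x)) / C"
    using f by (subst integral_divide_zero[symmetric]) (intro integral_mono; auto)
  also have "\<dots> \<le> 1"
    using \<open>expectation (\<lambda>x. exp (f x)) \<le> C\<close> \<open>C > 0\<close> by simp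
  finally show ?thesis
    using f prob_space by simp
qed

lemma emeasure_uniform_count_rounds:
  assumes "T \<ge> 1"
  shows "emeasure (uniform_count_measure {1..T}) {t \<in> {1..T}. good (t - 1)}
           = ennreal ((\<Sum>j<T. of_bool (good j)) / real T)"
proof -
  let ?G = "{j \<in> {..<T}. good j}"
  interpret prob_space "uniform_count_measure {1..T}"
    using assms by (intro prob_space_uniform_count_measure) auto
  have "{t \<in> {1..T}. good (t - 1)} = Suc ` ?G"
  proof (intro equalityI subsetI)
    fix t
    assume "t \<in> {t \<in> {1..T}. good (t - 1)}"
    then show "t \<in> Suc ` ?G"
      by (intro image_eqI[of _ _ "t - 1"]) auto
  qed auto
  moreover have "card (Suc ` ?G) = card ?G"
    by (simp add: card_image)
  moreover have "?G = {..<T} \<inter> {j. good j}"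
    by auto
  then have "real (card ?G) = (\<Sum>j<T. of_bool (good j))"
    by (simp add: sum_of_bool_eq)
  ultimately show ?thesis
    unfolding emeasure_eq_measure by (subst measure_uniform_count_measure) auto
qed

lemma measure_pair_uniform_round:
  fixes good :: "nat \<Rightarrow> 'b \<Rightarrow> bool"
  assumes "prob_space P" "T \<ge> 1" and good: "\<And>j. j < T \<Longrightarrow> {x \<in> space P. good j x} \<in> sets P"
  shows "measure (P \<Otimes>\<^sub>M uniform_count_measure {1..T})
           {\<omega> \<in> space (P \<Otimes>\<^sub>M uniform_count_measure {1..T}). good (snd \<omega> - 1) (fst \<omega>)}
         = (\<integral>x. (\<Sum>j<T. of_bool (good j x)) / real T \<partial>P)"
proof -
  let ?U = "uniform_count_measure {1..T}"
  let ?A = "{\<omega> \<in> space (P \<Otimes>\<^sub>M ?U). good (snd \<omega> - 1) (fst \<omega>)}"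
  define frac where "frac x = (\<Sum>j<T. of_bool (good j x)) / real T" for x
  interpret P: prob_space P
    by (rule assms(1))
  interpret U: prob_space ?U
    using assms(2) by (intro prob_space_uniform_count_measure) auto
  have space: "space (P \<Otimes>\<^sub>M ?U) = space P \<times> {1..T}"
    by (simp add: space_pair_measure space_uniform_count_measure)
  have "?A = (\<Union>t\<in>{1..T}. {x \<in> space P. good (t - 1) x} \<times> {t})"
    unfolding space by auto
  also have "\<dots> \<in> sets (P \<Otimes>\<^sub>M ?U)"
    using good by (intro sets.finite_UN pair_measureI) (auto simp: sets_uniform_count_measure)
  finally have A: "?A \<in> sets (P \<Otimes>\<^sub>M ?U)" .
  have slice: "emeasure ?U (Pair x -` ?A) = ennreal (frac x)" if "x \<in> space P" for x
  proof -
    have "Pair x -` ?A = {t \<in> {1..T}. good (t - 1) x}"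
      using that unfolding space by auto
    then show ?thesis
      unfolding frac_def by (simp only:) (rule emeasure_uniform_count_rounds[OF assms(2)])
  qed
  have frac: "0 \<le> frac x" "frac x \<le> 1" for x
    using sum_bounded_above[of "{..<T}" "\<lambda>j. of_bool (good j x)" "1 :: real"]
    by (auto simp: frac_def sum_nonneg divide_le_eq)
  have "(\<lambda>x. of_bool (good j x) :: real) \<in> borel_measurable P" if "j < T" for j
    using good[OF that] by (simp add: pred_def)
  then have "frac \<in> borel_measurable P"
    unfolding frac_def by (intro borel_measurable_divide borel_measurable_sum) auto
  then have "integrable P frac"
    using frac by (intro P.integrable_const_bound[where B = 1]) auto
  have "emeasure (P \<Otimes>\<^sub>M ?U) ?A = (\<integral>\<^sup>+x. emeasure ?U (Pair x -` ?A) \<partial>P)"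
    by (rule U.emeasure_pair_measure_alt[OF A])
  also have "\<dots> = (\<integral>\<^sup>+x. ennreal (frac x) \<partial>P)"
    by (intro nn_integral_cong slice)
  also have "\<dots> = ennreal (\<integral>x. frac x \<partial>P)"
    using \<open>integrable P frac\<close> frac by (intro nn_integral_eq_integral) auto
  finally have "measure (P \<Otimes>\<^sub>M ?U) ?A = (\<integral>x. frac x \<partial>P)"
    using frac by (simp add: measure_def integral_nonneg_AE)
  then show ?thesis
    unfolding frac_def .
qed

lemma (in prob_space) expected_fraction_good_ge:
  fixes X :: "nat \<Rightarrow> 'a \<Rightarrow> real" and good :: "nat \<Rightarrow> 'a \<Rightarrow> bool"
  assumes "c > 0" "T \<ge> 1" and X: "integrable M (\<lambda>x. \<Sum>j<T. X j x)"
    and good: "\<And>j. j < T \<Longrightarrow> {x \<in> space M. good j x} \<in> sets M"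
    and X_nonneg: "\<And>j x. j < T \<Longrightarrow> 0 \<le> X j x"
    and X_large: "\<And>j x. j < T \<Longrightarrow> \<not> good j x \<Longrightarrow> c \<le> X j x"
  shows "1 - expectation (\<lambda>x. \<Sum>j<T. X j x) / (c * real T)
           \<le> expectation (\<lambda>x. (\<Sum>j<T. of_bool (good j x)) / real T)"
proof -
  have "(\<lambda>x. of_bool (good j x) :: real) \<in> borel_measurable M" if "j < T" for j
    using good[OF that] by (simp add: pred_def)
  then have count: "integrable M (\<lambda>x. (\<Sum>j<T. of_bool (good j x)) / real T)"
    by (intro integrable_divide_zero Bochner_Integration.integrable_sum
        integrable_const_bound[where B = 1]) auto
  have "1 - (\<Sum>j<T. X j x) / (c * real T) \<le> (\<Sum>j<T. of_bool (good j x)) / real T" for x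
  proof -
    have "1 - X j x / c \<le> of_bool (good j x)" if "j < T" for j
      using X_nonneg[OF that, of x] X_large[OF that, of x] \<open>c > 0\<close> by (auto simp: field_simps)
    then have "(\<Sum>j<T. 1 - X j x / c) \<le> (\<Sum>j<T. of_bool (good j x))"
      by (intro sum_mono) auto
    moreover have "(\<Sum>j<T. 1 - X j x / c) = real T - (\<Sum>j<T. X j x) / c"
      by (simp add: sum_subtractf sum_divide_distrib)
    ultimately have "(real T - (\<Sum>j<T. X j x) / c) / real T \<le> (\<Sum>j<T. of_bool (good j x)) / real T"
      by (simp add: divide_right_mono)
    moreover have "1 - (\<Sum>j<T. X j x) / (c * real T) = (real T - (\<Sum>j<T. X j x) / c) / real T"
      using \<open>T \<ge> 1\<close> by (simp add: field_simps)
    ultimately show ?thesis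
      by simp
  qed
  then have "expectation (\<lambda>x. 1 - (\<Sum>j<T. X j x) / (c * real T))
      \<le> expectation (\<lambda>x. (\<Sum>j<T. of_bool (good j x)) / real T)"
    using X count by (intro integral_mono) auto
  then show ?thesis
    using X prob_space by (simp add: Bochner_Integration.integral_diff)
qed

lemma measure_good_round_ge:
  fixes X :: "nat \<Rightarrow> 'b \<Rightarrow> real" and good :: "nat \<Rightarrow> 'b \<Rightarrow> bool"
  assumes "prob_space P" "c > 0" "T \<ge> 1" "integrable P (\<lambda>x. \<Sum>j<T. X j x)"
    and "\<And>j. j < T \<Longrightarrow> {x \<in> space P. good j x} \<in> sets P"
    and "\<And>j x. j < T \<Longrightarrow> 0 \<le> X j x" and "\<And>j x. j < T \<Longrightarrow> \<not> good j x \<Longrightarrow> c \<le> X j x"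
  shows "1 - (\<integral>x. (\<Sum>j<T. X j x) \<partial>P) / (c * real T)
           \<le> measure (P \<Otimes>\<^sub>M uniform_count_measure {1..T})
                {\<omega> \<in> space (P \<Otimes>\<^sub>M uniform_count_measure {1..T}). good (snd \<omega> - 1) (fst \<omega>)}"
proof -
  have "1 - (\<integral>x. (\<Sum>j<T. X j x) \<partial>P) / (c * real T)
      \<le> (\<integral>x. (\<Sum>j<T. of_bool (good j x)) / real T \<partial>P)"
    by (rule prob_space.expected_fraction_good_ge[OF assms])
  also have "\<dots> = measure (P \<Otimes>\<^sub>M uniform_count_measure {1..T})
      {\<omega> \<in> space (P \<Otimes>\<^sub>M uniform_count_measure {1..T}). good (snd \<omega> - 1) (fst \<omega>)}"
    by (rule measure_pair_uniform_round[OF assms(1,3,5), symmetric])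
  finally show ?thesis .
qed

section \<open>The noisy multiplicative weights process\<close>

lemma
  assumes "finite V" "V \<noteq> {}" "\<And>v. v \<in> V \<Longrightarrow> w v > 0"
  shows normalize_nonneg: "v \<in> V \<Longrightarrow> normalize V w v \<ge> 0"
    and sum_normalize: "(\<Sum>v\<in>V. normalize V w v) = 1"
proof -
  have pos: "(\<Sum>u\<in>V. w u) > 0"
    using assms by (intro sum_pos) auto
  then show "v \<in> V \<Longrightarrow> normalize V w v \<ge> 0"
    using assms(3)[of v] by (simp add: normalize_def)
  show "(\<Sum>v\<in>V. normalize V w v) = 1"
    using pos by (simp add: normalize_def flip: sum_divide_distrib)
qed

abbreviation vertex_lists :: "'a set \<Rightarrow> 'a list set" where
  "vertex_lists V \<equiv> {xs. set xs \<subseteq> V \<and> length xs = card V}"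

lemma measurable_comparison_pattern:
  fixes f :: "'b \<Rightarrow> 'a \<Rightarrow> real"
  assumes "finite V" and f: "\<And>v. v \<in> V \<Longrightarrow> (\<lambda>x. f x v) \<in> borel_measurable M"
  shows "{x \<in> space M. {(u, v) \<in> V \<times> V. f x u \<le> f x v} = C} \<in> sets M"
proof (cases "C \<subseteq> V \<times> V")
  case True
  then have "{(u, v) \<in> V \<times> V. f x u \<le> f x v} = C
      \<longleftrightarrow> (\<forall>u\<in>V. \<forall>v\<in>V. (f x u \<le> f x v) = ((u, v) \<in> C))" for x
    by auto
  moreover have "Measurable.pred M (\<lambda>x. \<forall>u\<in>V. \<forall>v\<in>V. (f x u \<le> f x v) = ((u, v) \<in> C))"
  proof (intro pred_intros_finite(3) assms(1))
    fix u v
    assume "u \<in> V" "v \<in> V"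
    note [measurable] = f[OF \<open>u \<in> V\<close>] f[OF \<open>v \<in> V\<close>]
    show "Measurable.pred M (\<lambda>x. (f x u \<le> f x v) = ((u, v) \<in> C))"
      by measurable
  qed
  ultimately show ?thesis
    by (simp add: pred_def)
next
  case False
  then have "{(u, v) \<in> V \<times> V. f x u \<le> f x v} \<noteq> C" for x
    by blast
  then show ?thesis
    by simp
qed

text \<open>The ordering depends on the weights only through their comparison pattern, which takes
  finitely many values, each on a measurable set.\<close>

lemma measurable_order_by:
  assumes "finite V" and f: "\<And>v. v \<in> V \<Longrightarrow> (\<lambda>x. f x v) \<in> borel_measurable M"
  shows "(\<lambda>x. order_by V (f x)) \<in> measurable M (count_space (vertex_lists V))"
  unfolding measurable_count_space_eq2[OF finite_lists_length_eq[OF assms(1)]]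
proof (intro conjI ballI)
  show "(\<lambda>x. order_by V (f x)) \<in> space M \<rightarrow> vertex_lists V"
    using assms(1) by (auto simp: set_order_by length_order_by)
  fix a
  define cmp where "cmp x = {(u, v) \<in> V \<times> V. f x u \<le> f x v}" for x
  have "(\<lambda>x. order_by V (f x)) -` {a} \<inter> space M
      = (\<Union>C\<in>cmp ` {x \<in> space M. order_by V (f x) = a}. {x \<in> space M. cmp x = C})"
  proof (intro equalityI subsetI)
    fix x
    assume "x \<in> (\<Union>C\<in>cmp ` {x \<in> space M. order_by V (f x) = a}. {x \<in> space M. cmp x = C})"
    then obtain y where "x \<in> space M" "order_by V (f y) = a" "cmp x = cmp y"
      by auto
    moreover have "order_by V (f x) = order_by V (f y)"
      using assms(1) \<open>cmp x = cmp y\<close> by (intro order_by_cong) (auto simp: cmp_def set_eq_iff)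
    ultimately show "x \<in> (\<lambda>x. order_by V (f x)) -` {a} \<inter> space M"
      by simp
  qed auto
  moreover have "cmp ` {x \<in> space M. order_by V (f x) = a} \<subseteq> Pow (V \<times> V)"
    by (auto simp: cmp_def)
  then have "finite (cmp ` {x \<in> space M. order_by V (f x) = a})"
    using assms(1) by (meson finite_Pow_iff finite_SigmaI finite_subset)
  moreover have "{x \<in> space M. cmp x = C} \<in> sets M" for C
    unfolding cmp_def using assms by (rule measurable_comparison_pattern)
  ultimately show "(\<lambda>x. order_by V (f x)) -` {a} \<inter> space M \<in> sets M"
    by (simp only:) (rule sets.finite_UN)
qed

locale noisy_mwu =
  fixes V :: "'a::linorder set" and E :: "'a set set" and lam R eta :: real
  assumes finite_V: "finite V"
begin

abbreviation weights :: "(nat \<times> 'a \<Rightarrow> real) \<Rightarrow> nat \<Rightarrow> 'a \<Rightarrow> real" where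
  "weights \<equiv> mwu_weights V E lam R eta"

text \<open>Round \<open>k + 1\<close> of the algorithm uses the weights after \<open>k\<close> updates and the noise
  \<open>Z (k + 1, v)\<close>.\<close>

definition order_at :: "(nat \<times> 'a \<Rightarrow> real) \<Rightarrow> nat \<Rightarrow> 'a list" where
  "order_at Z k = order_by V (normalize V (weights Z k))"

definition loss :: "(nat \<times> 'a \<Rightarrow> real) \<Rightarrow> nat \<Rightarrow> 'a \<Rightarrow> real" where
  "loss Z k v = (1 / R) * (1 - real (qdeg E (order_at Z k) v) / lam)"

definition mean_loss :: "(nat \<times> 'a \<Rightarrow> real) \<Rightarrow> nat \<Rightarrow> real" where
  "mean_loss Z k = (\<Sum>v\<in>V. normalize V (weights Z k) v * loss Z k v)"

lemma mwu_sigma_eq_order_at: "mwu_sigma V E lam R eta Z t = order_at Z (t - 1)"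
  by (simp add: mwu_sigma_def mwu_p_def order_at_def)

lemma
  shows distinct_order_at: "distinct (order_at Z k)"
    and set_order_at: "set (order_at Z k) = V"
    and length_order_at: "length (order_at Z k) = card V"
    and sorted_order_at: "sorted_wrt (\<lambda>u v. normalize V (weights Z k) u \<ge> normalize V (weights Z k) v)
      (order_at Z k)"
  unfolding order_at_def using finite_V
  by (simp_all add: distinct_order_by set_order_by length_order_by sorted_order_by)

lemma weights_Suc: "weights Z (Suc k) v = weights Z k v * exp (- eta * (loss Z k v + Z (Suc k, v)))"
  by (simp add: Let_def loss_def order_at_def)

lemma weights_eq_exp: "weights Z k v = exp (- eta * (\<Sum>j<k. loss Z j v + Z (Suc j, v)))"
  by (induction k) (simp_all del: mwu_weights.simps(2) add: weights_Suc algebra_simps flip: exp_add)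

lemma weights_pos: "weights Z k v > 0"
  by (simp add: weights_eq_exp)

lemma
  assumes "V \<noteq> {}"
  shows normalize_weights_nonneg: "v \<in> V \<Longrightarrow> normalize V (weights Z k) v \<ge> 0"
    and sum_normalize_weights: "(\<Sum>v\<in>V. normalize V (weights Z k) v) = 1"
  using normalize_nonneg[OF finite_V assms weights_pos] sum_normalize[OF finite_V assms weights_pos]
  by simp_all

lemma order_at_cong_weights:
  assumes "\<And>v. v \<in> V \<Longrightarrow> weights Z k v = weights Z' k v"
  shows "order_at Z k = order_at Z' k"
proof -
  have "normalize V (weights Z k) v = normalize V (weights Z' k) v" if "v \<in> V" for v
    using assms that by (simp add: normalize_def cong: sum.cong)
  then show ?thesis
    unfolding order_at_def using finite_V by (intro order_by_cong) auto
qed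

lemma
  assumes "\<forall>j\<in>{1..k}. \<forall>v\<in>V. Z (j, v) = Z' (j, v)"
  shows weights_cong: "v \<in> V \<Longrightarrow> weights Z k v = weights Z' k v"
    and loss_cong: "loss Z k = loss Z' k"
    and mean_loss_cong: "mean_loss Z k = mean_loss Z' k"
proof -
  have weights: "\<forall>v\<in>V. weights Z k v = weights Z' k v"
    using assms
  proof (induction k)
    case (Suc k)
    then have "\<forall>v\<in>V. weights Z k v = weights Z' k v"
      by (meson atLeastAtMost_iff le_SucI)
    moreover from this have "order_at Z k = order_at Z' k"
      by (intro order_at_cong_weights) auto
    ultimately show ?case
      using Suc.prems by (simp del: mwu_weights.simps(2) add: weights_Suc loss_def)
  qed simp
  then have order: "order_at Z k = order_at Z' k"
    by (intro order_at_cong_weights) auto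
  show "v \<in> V \<Longrightarrow> weights Z k v = weights Z' k v"
    using weights by blast
  show "loss Z k = loss Z' k"
    using order by (simp add: fun_eq_iff loss_def)
  then show "mean_loss Z k = mean_loss Z' k"
    using weights unfolding mean_loss_def normalize_def by (intro sum.cong) simp_all
qed

lemma
  assumes "\<And>v. v \<in> V \<Longrightarrow> (\<lambda>Z. weights Z k v) \<in> borel_measurable M"
  shows measurable_order_at: "(\<lambda>Z. order_at Z k) \<in> measurable M (count_space (vertex_lists V))"
    and measurable_loss: "(\<lambda>Z. loss Z k v) \<in> borel_measurable M"
    and measurable_mean_loss: "(\<lambda>Z. mean_loss Z k) \<in> borel_measurable M"
proof -
  have "(\<lambda>Z. normalize V (weights Z k) v) \<in> borel_measurable M" if "v \<in> V" for v
    unfolding normalize_def using assms that by measurable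
  then show order: "(\<lambda>Z. order_at Z k) \<in> measurable M (count_space (vertex_lists V))"
    unfolding order_at_def by (rule measurable_order_by[OF finite_V])
  show loss: "(\<lambda>Z. loss Z k v) \<in> borel_measurable M" for v
    unfolding loss_def by (rule measurable_compose[OF order borel_measurable_count_space])
  show "(\<lambda>Z. mean_loss Z k) \<in> borel_measurable M"
    unfolding mean_loss_def normalize_def using assms loss by measurable
qed

lemma measurable_weights:
  assumes "\<And>j v. j \<in> {1..k} \<Longrightarrow> v \<in> V \<Longrightarrow> (\<lambda>Z. Z (j, v)) \<in> borel_measurable M"
  shows "v \<in> V \<Longrightarrow> (\<lambda>Z. weights Z k v) \<in> borel_measurable M"
  using assms
proof (induction k arbitrary: v)
  case (Suc k)
  then have "(\<lambda>Z. weights Z k v) \<in> borel_measurable M" if "v \<in> V" for v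
    using that by auto
  moreover have "(\<lambda>Z. Z (Suc k, v)) \<in> borel_measurable M"
    using Suc.prems by auto
  ultimately show ?case
    unfolding weights_Suc using Suc.prems(1) measurable_loss
    by (intro borel_measurable_times borel_measurable_exp borel_measurable_add measurable_const)
      auto
qed simp

lemma measurable_order_at_noise:
  "j \<le> k \<Longrightarrow> (\<lambda>Z. order_at Z j) \<in> measurable (gaussian_noise ({1..k} \<times> V) nu) (count_space (vertex_lists V))"
  by (intro measurable_order_at measurable_weights measurable_noise_coordinate) auto

lemma sets_order_at_noise:
  assumes "j \<le> k"
  shows "{Z \<in> space (gaussian_noise ({1..k} \<times> V) nu). P (order_at Z j)}
           \<in> sets (gaussian_noise ({1..k} \<times> V) nu)"
proof -
  have "Measurable.pred (gaussian_noise ({1..k} \<times> V) nu) (\<lambda>Z. P (order_at Z j))"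
    using assms by (intro measurable_compose[OF measurable_order_at_noise measurable_count_space])
  then show ?thesis
    by (simp add: pred_def)
qed

end

section \<open>The Hedge potential\<close>

locale noisy_mwu_bounded = noisy_mwu +
  fixes nu :: real
  assumes V_ne: "V \<noteq> {}" and nu_pos: "nu > 0" and eta_nonneg: "0 \<le> eta" and eta_le_1: "eta \<le> 1"
    and loss_bounded: "v \<in> V \<Longrightarrow> \<bar>loss Z k v\<bar> \<le> 1"
begin

lemma mean_loss_abs_le: "\<bar>mean_loss Z k\<bar> \<le> 1"
proof -
  let ?p = "normalize V (weights Z k)"
  have "\<bar>mean_loss Z k\<bar> \<le> (\<Sum>v\<in>V. \<bar>?p v * loss Z k v\<bar>)"
    unfolding mean_loss_def by (rule sum_abs)
  also have "\<dots> = (\<Sum>v\<in>V. ?p v * \<bar>loss Z k v\<bar>)"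
    using normalize_weights_nonneg[OF V_ne] by (intro sum.cong) (simp_all add: abs_mult)
  also have "\<dots> \<le> (\<Sum>v\<in>V. ?p v)"
    using normalize_weights_nonneg[OF V_ne] loss_bounded by (intro sum_mono mult_right_le_one_le) auto
  finally show ?thesis
    by (simp add: sum_normalize_weights[OF V_ne])
qed

definition potential :: "(nat \<times> 'a \<Rightarrow> real) \<Rightarrow> nat \<Rightarrow> real" where
  "potential Z k = (\<Sum>v\<in>V. weights Z k v) * exp (eta * (\<Sum>j<k. mean_loss Z j))"

definition potential_summand :: "(nat \<times> 'a \<Rightarrow> real) \<Rightarrow> nat \<Rightarrow> 'a \<Rightarrow> real" where
  "potential_summand Z k v = weights Z k v * exp (- eta * loss Z k v) * exp (eta * (\<Sum>j\<le>k. mean_loss Z j))"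

lemma potential_nonneg: "potential Z k \<ge> 0"
  unfolding potential_def by (intro mult_nonneg_nonneg sum_nonneg less_imp_le[OF weights_pos]) auto

lemma potential_summand_nonneg: "potential_summand Z k v \<ge> 0"
  unfolding potential_summand_def by (intro mult_nonneg_nonneg less_imp_le[OF weights_pos]) auto

lemma potential_Suc:
  "potential Z (Suc k) = (\<Sum>v\<in>V. potential_summand Z k v * exp (- eta * Z (Suc k, v)))"
  unfolding potential_def potential_summand_def weights_Suc sum_distrib_right lessThan_Suc_atMost
  by (intro sum.cong refl) (simp add: algebra_simps flip: exp_add)

lemma potential_summand_cong:
  assumes "\<forall>j\<in>{1..k}. \<forall>v\<in>V. Z (j, v) = Z' (j, v)" "v \<in> V"
  shows "potential_summand Z k v = potential_summand Z' k v"
proof -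
  have "mean_loss Z j = mean_loss Z' j" if "j \<le> k" for j
    using assms(1) that by (intro mean_loss_cong) auto
  then show ?thesis
    unfolding potential_summand_def weights_cong[OF assms] loss_cong[OF assms(1)] by simp
qed

lemma sum_potential_summand_le: "(\<Sum>v\<in>V. potential_summand Z k v) \<le> exp (eta\<^sup>2) * potential Z k"
proof -
  let ?p = "normalize V (weights Z k)"
  define W where "W = (\<Sum>v\<in>V. weights Z k v)"
  define C where "C = exp (eta * (\<Sum>j\<le>k. mean_loss Z j))"
  have "W > 0"
    unfolding W_def using finite_V V_ne by (intro sum_pos weights_pos)
  then have "weights Z k v = W * ?p v" for v
    by (simp add: normalize_def W_def)
  then have "(\<Sum>v\<in>V. potential_summand Z k v) = W * C * (\<Sum>v\<in>V. ?p v * exp (- eta * loss Z k v))"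
    by (simp add: potential_summand_def C_def sum_distrib_left algebra_simps)
  also have "\<dots> \<le> W * C * exp (- eta * mean_loss Z k + eta\<^sup>2)"
    unfolding mean_loss_def using \<open>W > 0\<close> normalize_weights_nonneg[OF V_ne]
    by (intro mult_left_mono sum_weighted_exp_le sum_normalize_weights V_ne loss_bounded
        eta_nonneg eta_le_1) (auto simp: C_def)
  also have "\<dots> = exp (eta\<^sup>2) * potential Z k"
    by (simp add: potential_def W_def C_def lessThan_Suc_atMost[symmetric] algebra_simps
        flip: exp_add)
  finally show ?thesis .
qed

lemma measurable_potential:
  assumes "\<And>j v. j \<in> {1..k} \<Longrightarrow> v \<in> V \<Longrightarrow> (\<lambda>Z. Z (j, v)) \<in> borel_measurable M"
  shows "(\<lambda>Z. potential Z k) \<in> borel_measurable M"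
proof -
  have weights: "(\<lambda>Z. weights Z j v) \<in> borel_measurable M" if "j \<le> k" "v \<in> V" for j v
    using that assms by (intro measurable_weights) auto
  then have "(\<lambda>Z. mean_loss Z j) \<in> borel_measurable M" if "j \<le> k" for j
    using that by (intro measurable_mean_loss) auto
  then show ?thesis
    unfolding potential_def using weights
    by (intro borel_measurable_times borel_measurable_exp borel_measurable_sum measurable_const) auto
qed

lemma nn_integral_potential_last_round:
  "(\<integral>\<^sup>+y. ennreal (potential (merge ({1..k} \<times> V) ({Suc k} \<times> V) (x, y)) (Suc k))
      \<partial>gaussian_noise ({Suc k} \<times> V) nu)
    = ennreal ((\<Sum>v\<in>V. potential_summand x k v) * exp (eta\<^sup>2 * nu\<^sup>2 / 2))"
proof -
  have "potential (merge ({1..k} \<times> V) ({Suc k} \<times> V) (x, y)) (Suc k)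
      = (\<Sum>v\<in>V. potential_summand x k v * exp (- eta * y (Suc k, v)))" for y
    unfolding potential_Suc
    by (intro sum.cong refl arg_cong2[where f = "(*)"] potential_summand_cong) (auto simp: merge_def)
  then show ?thesis
    by (simp only:) (rule nn_integral_sum_exp_noise[OF nu_pos finite_V potential_summand_nonneg])
qed

lemma nn_integral_potential_le:
  "(\<integral>\<^sup>+Z. ennreal (potential Z k) \<partial>gaussian_noise ({1..k} \<times> V) nu)
     \<le> ennreal (real (card V) * exp (real k * (eta\<^sup>2 * nu\<^sup>2 / 2 + eta\<^sup>2)))"
proof (induction k)
  case 0
  interpret prob_space "gaussian_noise ({} :: (nat \<times> 'a) set) nu"
    by (rule prob_space_gaussian_noise[OF nu_pos])
  show ?case
    by (simp add: potential_def emeasure_space_1)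
next
  case (Suc k)
  let ?K = "{1..k} \<times> V" and ?J = "{Suc k} \<times> V"
  let ?c = "eta\<^sup>2 * nu\<^sup>2 / 2 + eta\<^sup>2"
  interpret product_prob_space "\<lambda>_::nat \<times> 'a. centered_normal nu"
    by (intro product_prob_spaceI prob_space_normal_density nu_pos)
  have split: "{1..Suc k} \<times> V = ?K \<union> ?J" and disj: "?K \<inter> ?J = {}"
    by auto
  have "(\<lambda>Z. potential Z (Suc k)) \<in> borel_measurable (gaussian_noise (?K \<union> ?J) nu)"
    unfolding split[symmetric] by (intro measurable_potential measurable_noise_coordinate) auto
  then have "(\<integral>\<^sup>+Z. ennreal (potential Z (Suc k)) \<partial>gaussian_noise ({1..Suc k} \<times> V) nu)
      = (\<integral>\<^sup>+x. (\<integral>\<^sup>+y. ennreal (potential (merge ?K ?J (x, y)) (Suc k)) \<partial>gaussian_noise ?J nu)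
          \<partial>gaussian_noise ?K nu)"
    unfolding split using finite_V by (intro product_nn_integral_fold disj) auto
  also have "\<dots> = (\<integral>\<^sup>+x. ennreal ((\<Sum>v\<in>V. potential_summand x k v) * exp (eta\<^sup>2 * nu\<^sup>2 / 2))
      \<partial>gaussian_noise ?K nu)"
    by (intro nn_integral_cong nn_integral_potential_last_round)
  also have "\<dots> \<le> (\<integral>\<^sup>+x. ennreal (exp ?c) * ennreal (potential x k) \<partial>gaussian_noise ?K nu)"
  proof (intro nn_integral_mono)
    fix x
    have "(\<Sum>v\<in>V. potential_summand x k v) * exp (eta\<^sup>2 * nu\<^sup>2 / 2)
        \<le> exp (eta\<^sup>2) * potential x k * exp (eta\<^sup>2 * nu\<^sup>2 / 2)"
      by (intro mult_right_mono sum_potential_summand_le) auto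
    also have "\<dots> = exp ?c * potential x k"
      by (simp add: algebra_simps flip: exp_add)
    finally show "ennreal ((\<Sum>v\<in>V. potential_summand x k v) * exp (eta\<^sup>2 * nu\<^sup>2 / 2))
        \<le> ennreal (exp ?c) * ennreal (potential x k)"
      using potential_nonneg by (subst ennreal_mult[symmetric]) (auto intro: ennreal_leI)
  qed
  also have "\<dots> = ennreal (exp ?c) * (\<integral>\<^sup>+x. ennreal (potential x k) \<partial>gaussian_noise ?K nu)"
  proof (intro nn_integral_cmult measurable_compose[OF _ measurable_ennreal])
    show "(\<lambda>x. potential x k) \<in> borel_measurable (gaussian_noise ?K nu)"
      by (intro measurable_potential measurable_noise_coordinate) auto
  qed
  also have "\<dots> \<le> ennreal (exp ?c) * ennreal (real (card V) * exp (real k * ?c))"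
    by (intro mult_left_mono Suc.IH) auto
  also have "\<dots> = ennreal (real (card V) * exp (real (Suc k) * ?c))"
    by (simp add: algebra_simps flip: ennreal_mult exp_add)
  finally show ?case .
qed

definition mean_noise :: "'a set \<Rightarrow> (nat \<times> 'a \<Rightarrow> real) \<Rightarrow> nat \<Rightarrow> real" where
  "mean_noise S Z k = (\<Sum>j<k. \<Sum>v\<in>S. Z (Suc j, v)) / real (card S)"

text \<open>The regret bound against the uniform distribution on a set \<open>S\<close> of nonpositive total loss:
  the vertices of \<open>S\<close> keep weight at least \<open>exp\<close> of their average log-weight.\<close>

lemma potential_ge:
  assumes S: "S \<subseteq> V" "S \<noteq> {}" and loss_S: "\<And>j. j < k \<Longrightarrow> (\<Sum>v\<in>S. loss Z j v) \<le> 0"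
  shows "exp (eta * (\<Sum>j<k. mean_loss Z j) - eta * mean_noise S Z k) \<le> potential Z k"
proof -
  have "finite S"
    using S(1) finite_V finite_subset by blast
  define a where "a v = - eta * (\<Sum>j<k. loss Z j v + Z (Suc j, v))" for v
  have "(\<Sum>v\<in>S. a v) = - eta * ((\<Sum>v\<in>S. \<Sum>j<k. loss Z j v) + (\<Sum>v\<in>S. \<Sum>j<k. Z (Suc j, v)))"
    unfolding a_def by (simp add: sum_negf sum.distrib flip: sum_distrib_left)
  also have "\<dots> = - eta * ((\<Sum>j<k. \<Sum>v\<in>S. loss Z j v) + (\<Sum>j<k. \<Sum>v\<in>S. Z (Suc j, v)))"
    by (simp add: sum.swap[of _ S])
  moreover have "(\<Sum>j<k. \<Sum>v\<in>S. loss Z j v) \<le> 0"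
    by (rule sum_nonpos) (use loss_S in simp)
  then have "- eta * (\<Sum>j<k. \<Sum>v\<in>S. loss Z j v) \<ge> 0"
    using eta_nonneg by (simp add: mult_nonneg_nonpos)
  ultimately have "- eta * mean_noise S Z k \<le> (\<Sum>v\<in>S. a v) / real (card S)"
    using \<open>finite S\<close> S(2) by (simp add: mean_noise_def divide_le_eq card_gt_0_iff field_simps)
  then have "exp (- eta * mean_noise S Z k) \<le> (\<Sum>v\<in>S. exp (a v))"
    using exp_mean_le_sum_exp[OF \<open>finite S\<close> S(2), of a] by (meson exp_le_cancel_iff order_trans)
  also have "\<dots> \<le> (\<Sum>v\<in>V. weights Z k v)"
    using S(1) finite_V by (simp add: a_def weights_eq_exp sum_mono2)
  finally have "exp (- eta * mean_noise S Z k) * exp (eta * (\<Sum>j<k. mean_loss Z j)) \<le> potential Z k"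
    unfolding potential_def by (intro mult_right_mono) auto
  then show ?thesis
    by (simp add: algebra_simps flip: exp_add)
qed

lemma integrable_total_mean_loss:
  "integrable (gaussian_noise ({1..T} \<times> V) nu) (\<lambda>Z. \<Sum>j<T. mean_loss Z j)"
proof -
  interpret prob_space "gaussian_noise ({1..T} \<times> V) nu"
    by (rule prob_space_gaussian_noise[OF nu_pos])
  have "(\<lambda>Z. mean_loss Z j) \<in> borel_measurable (gaussian_noise ({1..T} \<times> V) nu)" if "j < T" for j
    using that
    by (intro measurable_mean_loss measurable_weights measurable_noise_coordinate) auto
  moreover have "\<bar>\<Sum>j<T. mean_loss Z j\<bar> \<le> real T" for Z
  proof -
    have "\<bar>\<Sum>j<T. mean_loss Z j\<bar> \<le> (\<Sum>j<T. \<bar>mean_loss Z j\<bar>)"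
      by (rule sum_abs)
    also have "\<dots> \<le> (\<Sum>j<T. 1)"
      by (intro sum_mono mean_loss_abs_le)
    finally show ?thesis
      by simp
  qed
  ultimately show ?thesis
    by (intro integrable_const_bound[where B = "real T"] borel_measurable_sum) auto
qed

lemma
  assumes "S \<subseteq> V" "S \<noteq> {}"
  shows integrable_mean_noise: "integrable (gaussian_noise ({1..T} \<times> V) nu) (\<lambda>Z. mean_noise S Z T)"
    and integral_mean_noise: "(\<integral>Z. mean_noise S Z T \<partial>gaussian_noise ({1..T} \<times> V) nu) = 0"
proof -
  have coordinate: "(Suc j, v) \<in> {1..T} \<times> V" if "j < T" "v \<in> S" for j v
    using that assms(1) by auto
  then show "integrable (gaussian_noise ({1..T} \<times> V) nu) (\<lambda>Z. mean_noise S Z T)"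
    unfolding mean_noise_def
    by (intro integrable_divide_zero Bochner_Integration.integrable_sum
        integrable_noise_coordinate[OF nu_pos]) (use assms(1) in auto)
  have "(\<integral>Z. (\<Sum>j<T. \<Sum>v\<in>S. Z (Suc j, v)) \<partial>gaussian_noise ({1..T} \<times> V) nu)
      = (\<Sum>j<T. \<Sum>v\<in>S. \<integral>Z. Z (Suc j, v) \<partial>gaussian_noise ({1..T} \<times> V) nu)"
    using coordinate
    by (simp add: Bochner_Integration.integral_sum Bochner_Integration.integrable_sum
        integrable_noise_coordinate[OF nu_pos])
  also have "\<dots> = 0"
    using coordinate by (simp add: integral_noise_coordinate[OF nu_pos])
  finally show "(\<integral>Z. mean_noise S Z T \<partial>gaussian_noise ({1..T} \<times> V) nu) = 0"
    by (simp add: mean_noise_def)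
qed

lemma expected_regret:
  assumes S: "S \<subseteq> V" "S \<noteq> {}" and loss_S: "\<And>Z j. (\<Sum>v\<in>S. loss Z j v) \<le> 0"
  shows "eta * (\<integral>Z. (\<Sum>j<T. mean_loss Z j) \<partial>gaussian_noise ({1..T} \<times> V) nu)
           \<le> ln (real (card V)) + real T * (eta\<^sup>2 * nu\<^sup>2 / 2 + eta\<^sup>2)"
proof -
  let ?P = "gaussian_noise ({1..T} \<times> V) nu"
  interpret prob_space ?P
    by (rule prob_space_gaussian_noise[OF nu_pos])
  define f where "f Z = eta * (\<Sum>j<T. mean_loss Z j) - eta * mean_noise S Z T" for Z
  define C where "C = real (card V) * exp (real T * (eta\<^sup>2 * nu\<^sup>2 / 2 + eta\<^sup>2))"
  have "C > 0"
    using finite_V V_ne by (simp add: C_def card_gt_0_iff)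
  have f: "integrable ?P f"
    unfolding f_def using integrable_total_mean_loss integrable_mean_noise[OF S] by auto
  have "(\<integral>\<^sup>+Z. ennreal (exp (f Z)) \<partial>?P) \<le> (\<integral>\<^sup>+Z. ennreal (potential Z T) \<partial>?P)"
    unfolding f_def using potential_ge[OF S loss_S] by (intro nn_integral_mono ennreal_leI)
  also have "\<dots> \<le> ennreal C"
    unfolding C_def by (rule nn_integral_potential_le)
  finally have "expectation f \<le> ln C"
    using f \<open>C > 0\<close> by (intro expectation_le_ln_of_nn_integral_exp)
  moreover have "expectation f = eta * (\<integral>Z. (\<Sum>j<T. mean_loss Z j) \<partial>?P)"
    unfolding f_def
    using integrable_total_mean_loss integrable_mean_noise[OF S] integral_mean_noise[OF S] by simp
  moreover have "ln C = ln (real (card V)) + real T * (eta\<^sup>2 * nu\<^sup>2 / 2 + eta\<^sup>2)"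
    using finite_V V_ne by (simp add: C_def ln_mult card_gt_0_iff)
  ultimately show ?thesis
    by simp
qed

end

section \<open>Dense subgraphs\<close>

text \<open>The choice \<open>R = (n + \<tau>) / \<lambda>\<^sup>*\<close> enters only through \<open>R \<lambda>\<^sup>* \<ge> n\<close>, which puts every loss
  into \<open>[-1, 1]\<close>.\<close>

locale densest_mwu =
  fixes V :: "'a::linorder set" and E :: "'a set set" and lam R eta :: real
  assumes graph: "simple_graph V E" and edge: "E \<noteq> {}" and lam_eq: "lam = max_density V E"
    and R_lam: "R * lam \<ge> real (card V)"

sublocale densest_mwu \<subseteq> noisy_mwu
  using graph by unfold_locales (simp add: simple_graph_def)

context densest_mwu
begin

lemma finite_E: "finite E"
  using graph finite_V by (auto simp: simple_graph_def intro: finite_subset[of E "Pow V"])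

lemma two_elem_edges: "\<forall>e\<in>E. card e = 2"
  using graph by (simp add: simple_graph_def)

lemma V_ne: "V \<noteq> {}"
  using graph edge by (auto simp: simple_graph_def)

lemma lam_pos: "lam > 0"
  unfolding lam_eq using graph edge by (rule max_density_pos)

lemma lam_le_card: "lam \<le> real (card V)"
  unfolding lam_eq using graph V_ne by (rule max_density_le_card)

lemma R_pos: "R > 0"
proof -
  have "0 < real (card V)"
    using V_ne finite_V by (simp add: card_gt_0_iff)
  then have "0 < R * lam"
    using R_lam by linarith
  then show ?thesis
    using lam_pos by (simp add: zero_less_mult_iff)
qed

lemma loss_eq: "loss Z k v = (lam - real (qdeg E (order_at Z k) v)) / (R * lam)"
  unfolding loss_def using lam_pos R_pos by (simp add: field_simps)

lemma loss_abs_le_1: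
  assumes "v \<in> V"
  shows "\<bar>loss Z k v\<bar> \<le> 1"
proof -
  have "qdeg E (order_at Z k) v < card V"
    using qdeg_less_length[OF distinct_order_at, of v] assms by (simp add: set_order_at length_order_at)
  then have "\<bar>lam - real (qdeg E (order_at Z k) v)\<bar> \<le> R * lam"
    using lam_pos lam_le_card R_lam by linarith
  then show ?thesis
    using lam_pos R_pos by (simp add: loss_eq abs_divide divide_le_eq_1)
qed

lemma sum_loss_densest_nonpos:
  assumes "S \<subseteq> V" "dens E S = lam"
  shows "(\<Sum>v\<in>S. loss Z k v) \<le> 0"
proof -
  have "card S \<noteq> 0"
  proof
    assume "card S = 0"
    then have "dens E S = 0"
      by (simp add: dens_def)
    with assms(2) lam_pos show False
      by simp
  qed
  then have "lam * real (card S) = real (card (edges_in E S))"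
    using assms(2) by (simp add: dens_def divide_eq_eq)
  also have "\<dots> \<le> (\<Sum>v\<in>S. real (qdeg E (order_at Z k) v))"
    using card_edges_in_le_sum_qdeg[OF distinct_order_at _ two_elem_edges] assms(1)
    by (simp add: set_order_at flip: of_nat_sum)
  finally have "(\<Sum>v\<in>S. lam - real (qdeg E (order_at Z k) v)) \<le> 0"
    by (simp add: sum_subtractf mult.commute)
  then show ?thesis
    using lam_pos R_pos by (simp add: loss_eq divide_nonpos_pos flip: sum_divide_distrib)
qed

lemma order_at_ne_Nil: "order_at Z k \<noteq> []"
  using V_ne set_order_at[of Z k] by auto

lemma weighted_qdeg_order_at_le:
  "(\<Sum>v\<in>V. normalize V (weights Z k) v * real (qdeg E (order_at Z k) v))
     \<le> dens E (best_prefix E (order_at Z k))"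
  using weighted_qdeg_le_best_prefix[OF distinct_order_at order_at_ne_Nil sorted_order_at _ _
      finite_E two_elem_edges]
    normalize_weights_nonneg[OF V_ne] sum_normalize_weights[OF V_ne]
  by (simp add: set_order_at)

lemma dens_best_prefix_order_at_le: "dens E (best_prefix E (order_at Z k)) \<le> lam"
proof -
  obtain x where "x \<in> V" "best_prefix E (order_at Z k) = prefix_set (order_at Z k) x"
    using best_prefix(1)[OF order_at_ne_Nil] set_order_at by blast
  moreover have "prefix_set (order_at Z k) x \<subseteq> V"
    using prefix_set_subset[of "order_at Z k" x] \<open>x \<in> V\<close> set_order_at by blast
  ultimately show ?thesis
    unfolding lam_eq by (simp add: dens_le_max_density[OF graph] prefix_set_def)
qed

lemma mean_loss_eq:
  "mean_loss Z k = (1 - (\<Sum>v\<in>V. normalize V (weights Z k) v * real (qdeg E (order_at Z k) v)) / lam) / R"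
proof -
  let ?p = "normalize V (weights Z k)" and ?q = "\<lambda>v. real (qdeg E (order_at Z k) v)"
  have "mean_loss Z k = (\<Sum>v\<in>V. ?p v / R - ?p v * ?q v / (R * lam))"
    unfolding mean_loss_def loss_def using lam_pos R_pos by (intro sum.cong refl) (simp add: field_simps)
  also have "\<dots> = (\<Sum>v\<in>V. ?p v) / R - (\<Sum>v\<in>V. ?p v * ?q v) / (R * lam)"
    by (simp add: sum_subtractf flip: sum_divide_distrib)
  finally show ?thesis
    using lam_pos R_pos by (simp add: sum_normalize_weights[OF V_ne] field_simps)
qed

lemma
  shows mean_loss_nonneg: "0 \<le> mean_loss Z k"
    and mean_loss_gt_if_sparse:
      "dens E (best_prefix E (order_at Z k)) < (1 - c) * lam \<Longrightarrow> c / R < mean_loss Z k"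
proof -
  let ?Q = "\<Sum>v\<in>V. normalize V (weights Z k) v * real (qdeg E (order_at Z k) v)"
  have "?Q \<le> lam"
    using weighted_qdeg_order_at_le dens_best_prefix_order_at_le by (rule order_trans)
  then show "0 \<le> mean_loss Z k"
    using lam_pos R_pos by (simp add: mean_loss_eq)
  assume "dens E (best_prefix E (order_at Z k)) < (1 - c) * lam"
  with weighted_qdeg_order_at_le[of Z k] have "?Q < (1 - c) * lam"
    by (rule le_less_trans)
  then have "c < 1 - ?Q / lam"
    using lam_pos by (simp add: field_simps)
  then show "c / R < mean_loss Z k"
    using R_pos by (simp add: mean_loss_eq divide_strict_right_mono)
qed

lemma R_ge_1: "1 \<le> R"
proof -
  have "1 * lam \<le> R * lam"
    using lam_le_card R_lam by simp
  then show ?thesis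
    using lam_pos by (simp add: mult_le_cancel_right)
qed

lemma expected_total_mean_loss_le:
  assumes nu: "0 < nu" "nu \<le> 1" and eta: "0 < eta" "eta \<le> 1"
    and ln_card: "ln (real (card V)) \<le> real T * eta\<^sup>2"
  shows "(\<integral>Z. (\<Sum>j<T. mean_loss Z j) \<partial>gaussian_noise ({1..T} \<times> V) nu) \<le> 5 / 2 * eta * real T"
proof -
  interpret noisy_mwu_bounded V E lam R eta nu
    using V_ne nu eta loss_abs_le_1 by unfold_locales auto
  obtain S where S: "S \<subseteq> V" "S \<noteq> {}" "dens E S = lam"
    using max_density_attained[OF graph V_ne] lam_eq by auto
  have "real T * (eta\<^sup>2 * nu\<^sup>2) \<le> real T * eta\<^sup>2"
    using nu by (intro mult_left_mono mult_left_le) (auto simp: power_le_one)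
  then have "eta * (\<integral>Z. (\<Sum>j<T. mean_loss Z j) \<partial>gaussian_noise ({1..T} \<times> V) nu)
      \<le> real T * eta\<^sup>2 + real T * (eta\<^sup>2 / 2 + eta\<^sup>2)"
    using expected_regret[OF S(1,2) sum_loss_densest_nonpos[OF S(1,3)], of T] ln_card
    by (simp add: algebra_simps)
  then show ?thesis
    using eta by (simp add: power2_eq_square field_simps)
qed

lemma measure_good_rounds_ge_half:
  assumes T: "T \<ge> 1" and nu: "0 < nu" "nu \<le> 1" and eta: "0 < eta"
    and ln_card: "ln (real (card V)) \<le> real T * eta\<^sup>2"
  shows "1 / 2 \<le> measure (gaussian_noise ({1..T} \<times> V) nu \<Otimes>\<^sub>M uniform_count_measure {1..T})
           {\<omega> \<in> space (gaussian_noise ({1..T} \<times> V) nu \<Otimes>\<^sub>M uniform_count_measure {1..T}).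
            (1 - 16 * R * eta) * lam \<le> dens E (best_prefix E (order_at (fst \<omega>) (snd \<omega> - 1)))}"
    (is "_ \<le> measure ?M {\<omega> \<in> space ?M. ?good (snd \<omega> - 1) (fst \<omega>)}")
proof (cases "16 * R * eta < 1")
  case True
  let ?P = "gaussian_noise ({1..T} \<times> V) nu"
  have "eta \<le> R * eta"
    using R_ge_1 eta by simp
  with True have "eta \<le> 1"
    by linarith
  interpret noisy_mwu_bounded V E lam R eta nu
    using V_ne nu eta \<open>eta \<le> 1\<close> loss_abs_le_1 by unfold_locales auto
  have "(\<integral>Z. (\<Sum>j<T. mean_loss Z j) \<partial>?P) \<le> 5 / 2 * eta * real T"
    by (rule expected_total_mean_loss_le[OF nu eta \<open>eta \<le> 1\<close> ln_card])
  moreover have "0 \<le> eta * real T"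
    using eta by simp
  ultimately have "(\<integral>Z. (\<Sum>j<T. mean_loss Z j) \<partial>?P) \<le> 1 / 2 * (16 * eta * real T)"
    by linarith
  then have "1 / 2 \<le> 1 - (\<integral>Z. (\<Sum>j<T. mean_loss Z j) \<partial>?P) / (16 * eta * real T)"
    using eta T by (simp add: divide_le_eq)
  also have "\<dots> \<le> measure ?M {\<omega> \<in> space ?M. ?good (snd \<omega> - 1) (fst \<omega>)}"
  proof (intro measure_good_round_ge prob_space_gaussian_noise integrable_total_mean_loss
      mean_loss_nonneg)
    show "{Z \<in> space ?P. ?good j Z} \<in> sets ?P" if "j < T" for j
      using that by (intro sets_order_at_noise) simp
    show "16 * eta \<le> mean_loss Z j" if "\<not> ?good j Z" for j Z
      using mean_loss_gt_if_sparse[of Z j "16 * R * eta"] that R_pos by simp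
  qed (use nu eta T in auto)
  finally show ?thesis .
next
  case False
  then have "(1 - 16 * R * eta) * lam \<le> 0"
    using lam_pos by (simp add: mult_nonpos_nonneg)
  then have "{\<omega> \<in> space ?M. ?good (snd \<omega> - 1) (fst \<omega>)} = space ?M"
    using dens_nonneg order_trans by blast
  moreover have "prob_space ?M"
    using T prob_space_gaussian_noise[OF nu(1)]
    by (intro prob_space_pair prob_space_uniform_count_measure) auto
  ultimately show ?thesis
    by (simp add: prob_space.prob_space)
qed

end

theorem mainTheorem7:
  fixes V :: "'a::linorder set" and E :: "'a set set" and T :: nat and \<tau> :: real
    and n :: nat and lam R \<nu> \<eta> \<alpha> :: real
    and M :: "((nat \<times> 'a \<Rightarrow> real) \<times> nat) measure"
  assumes G: "simple_graph V E"
    and n_def: "n = card V"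
    and n2: "n \<ge> 2"
    and Ene: "E \<noteq> {}"
    and T1: "T \<ge> 1"
    and tau: "\<tau> > 0"
    and lam_def: "lam = max_density V E"
    and R_def: "R = (real n + \<tau>) / lam"
    and nu_def: "\<nu> = \<tau> / (R * lam)"
    and eta_def: "\<eta> = sqrt (ln (real n) / real T)"
    and alpha_def: "\<alpha> = 8 * R * sqrt (ln (real n) / real T)"
    and M_def: "M = mwu_space V T \<nu>"
  shows "(\<forall>\<omega>\<in>space M.
            let p = mwu_p V E lam R \<eta> (fst \<omega>) (snd \<omega>);
                \<sigma> = mwu_sigma V E lam R \<eta> (fst \<omega>) (snd \<omega>)
            in distinct \<sigma> \<and> set \<sigma> = V \<and> sorted_wrt (\<lambda>u v. p u \<ge> p v) \<sigma>)
       \<and> measure M {\<omega> \<in> space M.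
            dens E (best_prefix E (mwu_sigma V E lam R \<eta> (fst \<omega>) (snd \<omega>)))
              \<ge> (1 - 2 * \<alpha>) * lam} \<ge> 1 / 2"
proof -
  have lam_pos: "lam > 0"
    unfolding lam_def using G Ene by (rule max_density_pos)
  then have R_lam_eq: "R * lam = real n + \<tau>"
    by (simp add: R_def)
  interpret densest_mwu V E lam R \<eta>
    using G Ene lam_def R_lam_eq tau n_def by unfold_locales auto
  have "0 < \<nu>" "\<nu> \<le> 1"
    using tau by (simp_all add: nu_def R_lam_eq)
  moreover have "ln (real n) > 0" "real T > 0"
    using n2 T1 by simp_all
  then have "0 < \<eta>" "ln (real (card V)) \<le> real T * \<eta>\<^sup>2"
    using n_def by (simp_all add: eta_def)
  moreover have "2 * \<alpha> = 16 * R * \<eta>"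
    by (simp add: alpha_def eta_def)
  ultimately have "1 / 2 \<le> measure M {\<omega> \<in> space M.
      (1 - 2 * \<alpha>) * lam \<le> dens E (best_prefix E (mwu_sigma V E lam R \<eta> (fst \<omega>) (snd \<omega>)))}"
    using measure_good_rounds_ge_half[OF T1]
    by (simp add: M_def mwu_space_def mwu_sigma_eq_order_at mult.assoc)
  then show ?thesis
    using finite_V by (simp add: Let_def mwu_sigma_def distinct_order_by set_order_by sorted_order_by)
qed

end
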